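(* Let $n\ge1$ and $y=(y_1,\dots,y_{2n})\in\mathbb Z^{2n}$ with $y_1<y_2<\dots<y_{2n}$. Then for every $\eta\in\{0,1\}^{\mathbb Z}$, \[ \mathcal L\,\Sigma_y(\eta)=\sum_{i=1}^{2n}L_{y_i}\Sigma_y(\eta), \] where $L_{y_i}$ denotes the operator $L$ acting on the variable $y_i$ of $y\mapsto\Sigma_y(\eta)$.
   Context: Fix $\theta\in[0,1]$ and uniformly bounded nonnegative rates $(p_x,q_x)_{x\in\mathbb Z}$. $\mathcal L$ is the generator acting on $F:\{0,1\}^{\mathbb Z}\to\mathbb R$ depending on finitely many coordinates by $\mathcal L F(\eta)=\sum_{x}q_x\big(\theta F(\eta^a_{x,x-1})+(1-\theta)F(\eta^c_{x,x-1})-F(\eta)\big)+\sum_x p_x\big(\theta F(\eta^a_{x-1,x})+(1-\theta)F(\eta^c_{x-1,x})-F(\eta)\big)$, where for $x\ne y$, $\eta^a_{x,y},\eta^c_{x,y}$ agree with $\eta$ off $\{x,y\}$, vanish at $x$, and $\eta^a_{x,y}(y)=(\eta(x)+\eta(y))\bmod2$, $\eta^c_{x,y}(y)=\min\{1,\eta(x)+\eta(y)\}$. The one-particle operator is $Lf(x)=q_xD^+f(x)+p_xD^-f(x)$ for $f:\mathbb Z\to\mathbb R$, where $D^+f(x)=f(x+1)-f(x)$, $D^-f(x)=f(x-1)-f(x)$. For $y\le z$, $\eta[y,z)=\sum_{y\le x<z}\eta(x)$ ($=0$ if $y=z$), $\sigma_{y,z}(\eta)=(-\theta)^{\eta[y,z)}$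 with $0^0=1$, and for $y_1\le\dots\le y_{2n}$, $\Sigma_y(\eta)=\prod_{i=1}^n\sigma_{y_{2i-1},y_{2i}}(\eta)$. *)

theory Defs
  imports "HOL-Analysis.Analysis"
begin

text \<open>Configurations \<eta> in {0,1}^Z are represented as int \<Rightarrow> bool (True = 1).\<close>

type_synonym config = "int \<Rightarrow> bool"

text \<open>eta^a_{x,y}: vanishes at x, y-value is (eta x + eta y) mod 2.\<close>
definition etaA :: "config \<Rightarrow> int \<Rightarrow> int \<Rightarrow> config" where
  "etaA \<eta> x y = \<eta>(x := False, y := (\<eta> x \<noteq> \<eta> y))"

text \<open>eta^c_{x,y}: vanishes at x, y-value is min 1 (eta x + eta y).\<close>
definition etaC :: "config \<Rightarrow> int \<Rightarrow> int \<Rightarrow> config" where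
  "etaC \<eta> x y = \<eta>(x := False, y := (\<eta> x \<or> \<eta> y))"

text \<open>The generator on local functions F (the sums over Z have finite support for local F).\<close>
definition gen :: "real \<Rightarrow> (int \<Rightarrow> real) \<Rightarrow> (int \<Rightarrow> real) \<Rightarrow> (config \<Rightarrow> real) \<Rightarrow> config \<Rightarrow> real" where
  "gen \<theta> p q F \<eta> =
     (\<Sum>\<^sub>\<infinity>x\<in>(UNIV::int set). q x * (\<theta> * F (etaA \<eta> x (x - 1)) + (1 - \<theta>) * F (etaC \<eta> x (x - 1)) - F \<eta>))
   + (\<Sum>\<^sub>\<infinity>x\<in>(UNIV::int set). p x * (\<theta> * F (etaA \<eta> (x - 1) x) + (1 - \<theta>) * F (etaC \<eta> (x - 1) x) - F \<eta>))"

definition cnt :: "config \<Rightarrow> int \<Rightarrow> int \<Rightarrow> nat" where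
  "cnt \<eta> y z = (\<Sum>x\<in>{y..<z}. if \<eta> x then 1 else 0)"

definition sigma :: "real \<Rightarrow> int \<Rightarrow> int \<Rightarrow> config \<Rightarrow> real" where
  "sigma \<theta> y z \<eta> = (- \<theta>) ^ cnt \<eta> y z"

text \<open>y = (y_1,...,y_{2n}) is represented as y :: nat \<Rightarrow> int, using indices 1..2n.\<close>
definition Sigma :: "real \<Rightarrow> nat \<Rightarrow> (nat \<Rightarrow> int) \<Rightarrow> config \<Rightarrow> real" where
  "Sigma \<theta> n y \<eta> = (\<Prod>i\<in>{1..n}. sigma \<theta> (y (2*i - 1)) (y (2*i)) \<eta>)"

definition Lvar :: "(int \<Rightarrow> real) \<Rightarrow> (int \<Rightarrow> real) \<Rightarrow> nat \<Rightarrow> ((nat \<Rightarrow> int) \<Rightarrow> real) \<Rightarrow> (nat \<Rightarrow> int) \<Rightarrow> real" where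
  "Lvar p q i G y = q (y i) * (G (y(i := y i + 1)) - G y) + p (y i) * (G (y(i := y i - 1)) - G y)"

end

theory Submission imports Defs begin

text \<open>Write \<open>\<Sigma>\<^sub>y\<close> as the product of the factors \<open>(-\<theta>)\<^bsup>\<eta>[a,b)\<^esup>\<close> over the intervals
  \<open>[a,b) = [y (2i-1), y (2i))\<close>. As these intervals are separated, a jump across the bond
  \<open>{x - 1, x}\<close> changes at most the one factor whose closed interval contains x. If the target
  of the jump lies in [a,b), the \<theta>-average of the annihilating and the coalescing outcome is
  \<open>(-\<theta>)\<close> to the number of particles on [a,b) enlarged by the source site, by the duality
  \<open>\<theta> (-\<theta>)\<^bsup>[s \<noteq> t]\<^esup> + (1 - \<theta>) (-\<theta>)\<^bsup>[s \<or> t]\<^esup> = (-\<theta>)\<^bsup>[s] + [t]\<^esup>\<close>; if only the source lies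
  in [a,b), both outcomes just empty the source. Either way the result is the factor with its
  endpoint at x moved by one step, which is how the one-particle operator moves that coordinate
  of y.\<close>

definition occupation :: "config \<Rightarrow> int set \<Rightarrow> nat" where
  "occupation \<eta> K = (\<Sum>x\<in>K. if \<eta> x then 1 else 0)"

lemma cnt_eq_occupation: "cnt \<eta> a b = occupation \<eta> {a..<b}"
  by (simp add: cnt_def occupation_def)

lemma occupation_cong: "(\<And>z. z \<in> K \<Longrightarrow> \<eta> z = \<eta>' z) \<Longrightarrow> occupation \<eta> K = occupation \<eta>' K"
  unfolding occupation_def by (rule sum.cong) auto

lemma occupation_insert_remove:
  "finite K \<Longrightarrow> occupation \<eta> (insert u K) = (if \<eta> u then 1 else 0) + occupation \<eta> (K - {u})"
  unfolding occupation_def by (rule sum.insert_remove)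

lemma occupation_remove_empty_site:
  assumes "finite K" "\<not> \<eta> u"
  shows "occupation \<eta> K = occupation \<eta> (K - {u})"
  using occupation_insert_remove[of "K - {u}" \<eta> u] assms
  by (cases "u \<in> K") (simp_all add: insert_absorb)

lemma occupation_jump_target_outside:
  assumes "finite K" "v \<notin> K" "u \<noteq> v"
  shows "occupation (etaA \<eta> u v) K = occupation \<eta> (K - {u})"
    and "occupation (etaC \<eta> u v) K = occupation \<eta> (K - {u})"
proof -
  have "occupation \<eta>' K = occupation \<eta> (K - {u})"
    if "\<eta>' = \<eta>(u := False, v := c)" for \<eta>' c
  proof -
    have "occupation \<eta>' K = occupation \<eta>' (K - {u})"
      using that assms(1,3) by (intro occupation_remove_empty_site) auto
    also have "\<dots> = occupation \<eta> (K - {u})"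
      using that assms(2) by (intro occupation_cong) auto
    finally show ?thesis .
  qed
  then show "occupation (etaA \<eta> u v) K = occupation \<eta> (K - {u})"
    and "occupation (etaC \<eta> u v) K = occupation \<eta> (K - {u})"
    unfolding etaA_def etaC_def by blast+
qed

lemma pair_duality:
  fixes \<theta> :: real
  shows "\<theta> * (-\<theta>) ^ (if s \<noteq> t then 1 else 0) + (1 - \<theta>) * (-\<theta>) ^ (if s \<or> t then 1 else 0)
    = (-\<theta>) ^ ((if s then 1 else 0) + (if t then 1 else 0))"
  by (cases s; cases t) (simp_all add: power2_eq_square algebra_simps)

lemma occupation_jump_target_inside:
  fixes \<theta> :: real
  assumes "finite K" "v \<in> K" "u \<noteq> v"
  shows "\<theta> * (-\<theta>) ^ occupation (etaA \<eta> u v) K + (1 - \<theta>) * (-\<theta>) ^ occupation (etaC \<eta> u v) K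
    = (-\<theta>) ^ occupation \<eta> (insert u K)"
proof -
  define r where "r = occupation \<eta> (K - {v} - {u})"
  have K: "K = insert v (K - {v})" using assms(2) by blast
  have "occupation (etaA \<eta> u v) K = (if \<eta> u \<noteq> \<eta> v then 1 else 0) + r"
    and "occupation (etaC \<eta> u v) K = (if \<eta> u \<or> \<eta> v then 1 else 0) + r"
    using assms occupation_jump_target_outside[of "K - {v}" v u \<eta>]
    by (subst K, simp add: occupation_insert_remove etaA_def etaC_def r_def)+
  moreover have "occupation \<eta> (insert u K) = ((if \<eta> u then 1 else 0) + (if \<eta> v then 1 else 0)) + r"
    using assms
    by (subst K) (simp add: occupation_insert_remove insert_Diff_if r_def Diff_insert2[symmetric] insert_commute)
  ultimately show ?thesis
    by (simp add: power_add pair_duality[of \<theta> "\<eta> u" "\<eta> v", symmetric] algebra_simps)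
qed

lemma sigma_jump_away:
  assumes "u \<notin> {a..<b}" "v \<notin> {a..<b}"
  shows "sigma \<theta> a b (etaA \<eta> u v) = sigma \<theta> a b \<eta>"
    and "sigma \<theta> a b (etaC \<eta> u v) = sigma \<theta> a b \<eta>"
  using assms
  by (auto simp: sigma_def cnt_def etaA_def etaC_def intro!: sum.cong arg_cong[where f="(^) _"])

lemma sigma_average_jump_left:
  assumes "a < b"
  shows "\<theta> * sigma \<theta> a b (etaA \<eta> x (x - 1)) + (1 - \<theta>) * sigma \<theta> a b (etaC \<eta> x (x - 1))
    = sigma \<theta> (if a = x then x + 1 else a) (if b = x then x + 1 else b) \<eta>"
proof (cases "x - 1 \<in> {a..<b}")
  case True
  then have "insert x {a..<b} = {a..<(if b = x then x + 1 else b)}" "a \<noteq> x" by auto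
  then show ?thesis
    using occupation_jump_target_inside[of "{a..<b}" "x - 1" x \<theta> \<eta>] True
    by (simp add: sigma_def cnt_eq_occupation)
next
  case False
  then have "{a..<b} - {x} = {(if a = x then x + 1 else a)..<(if b = x then x + 1 else b)}"
    using assms by auto
  then show ?thesis
    using occupation_jump_target_outside[of "{a..<b}" "x - 1"] False
    by (simp add: sigma_def cnt_eq_occupation algebra_simps)
qed

lemma sigma_average_jump_right:
  assumes "a < b"
  shows "\<theta> * sigma \<theta> a b (etaA \<eta> (x - 1) x) + (1 - \<theta>) * sigma \<theta> a b (etaC \<eta> (x - 1) x)
    = sigma \<theta> (if a = x then x - 1 else a) (if b = x then x - 1 else b) \<eta>"
proof (cases "x \<in> {a..<b}")
  case True
  then have "insert (x - 1) {a..<b} = {(if a = x then x - 1 else a)..<b}" "b \<noteq> x" by auto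
  then show ?thesis
    using occupation_jump_target_inside[of "{a..<b}" x "x - 1" \<theta> \<eta>] True
    by (simp add: sigma_def cnt_eq_occupation)
next
  case False
  then have "{a..<b} - {x - 1} = {(if a = x then x - 1 else a)..<(if b = x then x - 1 else b)}"
    using assms by auto
  then show ?thesis
    using occupation_jump_target_outside[of "{a..<b}" x] False
    by (simp add: sigma_def cnt_eq_occupation algebra_simps)
qed

lemma convex_combination_prod_single_factor:
  fixes f g h :: "'a \<Rightarrow> 'b::comm_ring_1"
  assumes "finite A"
    and "\<And>j. j \<in> A \<Longrightarrow> j \<noteq> i \<Longrightarrow> f j = h j \<and> g j = h j"
    and "i \<in> A \<Longrightarrow> t * f i + (1 - t) * g i = h i"
  shows "t * prod f A + (1 - t) * prod g A = prod h A"
proof (cases "i \<in> A")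
  case True
  have "prod f (A - {i}) = prod h (A - {i})" "prod g (A - {i}) = prod h (A - {i})"
    using assms(2) by (auto intro!: prod.cong)
  then have "t * prod f A + (1 - t) * prod g A = (t * f i + (1 - t) * g i) * prod h (A - {i})"
    using assms(1) True by (simp add: prod.remove[of A i] algebra_simps)
  also have "\<dots> = prod h A"
    using assms(1,3) True by (simp add: prod.remove[of A i])
  finally show ?thesis .
next
  case False
  then have "prod f A = prod h A" "prod g A = prod h A"
    using assms(2) by (auto intro!: prod.cong)
  then show ?thesis by (simp add: algebra_simps)
qed

lemma strict_mono_on_from_Suc:
  fixes y :: "nat \<Rightarrow> 'a::order"
  assumes "\<And>i. 1 \<le> i \<Longrightarrow> i < m \<Longrightarrow> y i < y (Suc i)"
  shows "strict_mono_on {1..m} y"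
proof (rule strict_mono_onI)
  fix i j assume "i \<in> {1..m}" "j \<in> {1..m}" "i < j"
  then show "y i < y j"
    using lift_Suc_mono_less_ivl[of "{1..<m}" y i j] assms by auto
qed

lemma Sigma_cong:
  assumes "\<And>k. k \<in> {1..2*n} \<Longrightarrow> y k = y' k"
  shows "Sigma \<theta> n y \<eta> = Sigma \<theta> n y' \<eta>"
  unfolding Sigma_def
proof (rule prod.cong[OF refl])
  fix i assume "i \<in> {1..n}"
  then have "2*i - 1 \<in> {1..2*n}" "2*i \<in> {1..2*n}" by auto
  then show "sigma \<theta> (y (2*i - 1)) (y (2*i)) \<eta> = sigma \<theta> (y' (2*i - 1)) (y' (2*i)) \<eta>"
    by (simp add: assms)
qed

lemma Sigma_average_jump:
  fixes \<theta> :: real and s :: "int \<Rightarrow> int" and y :: "nat \<Rightarrow> int"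
  assumes incr: "\<And>i. 1 \<le> i \<Longrightarrow> i < 2*n \<Longrightarrow> y i < y (Suc i)"
    and avg: "\<And>a b. a < b \<Longrightarrow>
      \<theta> * sigma \<theta> a b \<eta>A + (1 - \<theta>) * sigma \<theta> a b \<eta>C = sigma \<theta> (s a) (s b) \<eta>"
    and away: "\<And>a b. x < a \<or> b < x \<Longrightarrow>
      sigma \<theta> a b \<eta>A = sigma \<theta> a b \<eta> \<and> sigma \<theta> a b \<eta>C = sigma \<theta> a b \<eta>"
    and fixed: "\<And>z. z \<noteq> x \<Longrightarrow> s z = z"
  shows "\<theta> * Sigma \<theta> n y \<eta>A + (1 - \<theta>) * Sigma \<theta> n y \<eta>C = Sigma \<theta> n (s \<circ> y) \<eta>"
proof -
  define a where "a j = y (2*j - 1)" for j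
  define b where "b j = y (2*j)" for j
  have mono: "strict_mono_on {1..2*n} y"
    using incr by (rule strict_mono_on_from_Suc)
  have ab: "a j < b j" if "j \<in> {1..n}" for j
    using strict_mono_onD[OF mono, of "2*j - 1" "2*j"] that by (auto simp: a_def b_def)
  have separated: "b j < a j'" if "j \<in> {1..n}" "j' \<in> {1..n}" "j < j'" for j j'
    using strict_mono_onD[OF mono, of "2*j" "2*j' - 1"] that by (auto simp: a_def b_def)
  obtain i where i: "\<And>j. j \<in> {1..n} \<Longrightarrow> a j \<le> x \<Longrightarrow> x \<le> b j \<Longrightarrow> j = i"
  proof (cases "\<exists>j\<in>{1..n}. a j \<le> x \<and> x \<le> b j")
    case True
    then obtain i where "i \<in> {1..n}" "a i \<le> x" "x \<le> b i" by blast
    then show ?thesis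
      using that separated
      by (metis linorder_neqE_nat order.strict_trans1 order.strict_trans2 order.irrefl)
  qed blast
  have "\<theta> * (\<Prod>j\<in>{1..n}. sigma \<theta> (a j) (b j) \<eta>A)
      + (1 - \<theta>) * (\<Prod>j\<in>{1..n}. sigma \<theta> (a j) (b j) \<eta>C)
      = (\<Prod>j\<in>{1..n}. sigma \<theta> (s (a j)) (s (b j)) \<eta>)"
  proof (rule convex_combination_prod_single_factor[where i = i])
    fix j assume j: "j \<in> {1..n}" "j \<noteq> i"
    then have outside: "x < a j \<or> b j < x" using i by force
    then have "s (a j) = a j" "s (b j) = b j"
      using ab[OF j(1)] fixed by auto
    with away[OF outside] show "sigma \<theta> (a j) (b j) \<eta>A = sigma \<theta> (s (a j)) (s (b j)) \<eta>
        \<and> sigma \<theta> (a j) (b j) \<eta>C = sigma \<theta> (s (a j)) (s (b j)) \<eta>"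
      by simp
  qed (use ab avg in auto)
  then show ?thesis
    by (simp add: Sigma_def a_def b_def)
qed

lemma infsum_Sigma_endpoint_moves:
  fixes r :: "int \<Rightarrow> real" and f :: "int \<Rightarrow> int"
  assumes inj: "inj_on y {1..2*n}"
  shows "(\<Sum>\<^sub>\<infinity>x\<in>UNIV.
      r x * (Sigma \<theta> n ((\<lambda>z. if z = x then f x else z) \<circ> y) \<eta> - Sigma \<theta> n y \<eta>))
    = (\<Sum>k\<in>{1..2*n}. r (y k) * (Sigma \<theta> n (y(k := f (y k))) \<eta> - Sigma \<theta> n y \<eta>))"
proof -
  let ?move = "\<lambda>x. (\<lambda>z. if z = x then f x else z) \<circ> y"
  let ?term = "\<lambda>x. r x * (Sigma \<theta> n (?move x) \<eta> - Sigma \<theta> n y \<eta>)"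
  have "?term x = 0" if "x \<notin> y ` {1..2*n}" for x
    using that by (auto intro!: Sigma_cong)
  then have "(\<Sum>\<^sub>\<infinity>x\<in>UNIV. ?term x) = (\<Sum>\<^sub>\<infinity>x\<in>y ` {1..2*n}. ?term x)"
    by (intro infsum_cong_neutral) auto
  also have "\<dots> = (\<Sum>x\<in>y ` {1..2*n}. ?term x)"
    by simp
  also have "\<dots> = (\<Sum>k\<in>{1..2*n}. ?term (y k))"
    using inj by (rule sum.reindex[unfolded comp_def])
  also have "\<dots> = (\<Sum>k\<in>{1..2*n}. r (y k) * (Sigma \<theta> n (y(k := f (y k))) \<eta> - Sigma \<theta> n y \<eta>))"
    using inj by (intro sum.cong refl arg_cong2[where f="\<lambda>u v. r (y u) * (v - _)"] Sigma_cong)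
      (auto dest: inj_onD)
  finally show ?thesis .
qed

theorem lemma1:
  fixes \<theta> :: real and p q :: "int \<Rightarrow> real" and n :: nat and y :: "nat \<Rightarrow> int" and \<eta> :: config
  assumes "0 \<le> \<theta>" "\<theta> \<le> 1"
    and "\<And>x. 0 \<le> p x" "\<And>x. 0 \<le> q x"
    and "\<exists>M. \<forall>x. p x \<le> M \<and> q x \<le> M"
    and "1 \<le> n"
    and incr: "\<And>i. 1 \<le> i \<Longrightarrow> i < 2*n \<Longrightarrow> y i < y (Suc i)"
  shows "gen \<theta> p q (Sigma \<theta> n y) \<eta> = (\<Sum>i\<in>{1..2*n}. Lvar p q i (\<lambda>z. Sigma \<theta> n z \<eta>) y)"
proof -
  have inj: "inj_on y {1..2*n}"
    using strict_mono_on_from_Suc[of "2*n" y, OF incr] by (rule strict_mono_on_imp_inj_on)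
  have left: "\<theta> * Sigma \<theta> n y (etaA \<eta> x (x - 1)) + (1 - \<theta>) * Sigma \<theta> n y (etaC \<eta> x (x - 1))
      = Sigma \<theta> n ((\<lambda>z. if z = x then x + 1 else z) \<circ> y) \<eta>" for x
    by (rule Sigma_average_jump[where n = n and y = y, OF incr])
      (auto simp: sigma_average_jump_left intro: sigma_jump_away)
  have right: "\<theta> * Sigma \<theta> n y (etaA \<eta> (x - 1) x) + (1 - \<theta>) * Sigma \<theta> n y (etaC \<eta> (x - 1) x)
      = Sigma \<theta> n ((\<lambda>z. if z = x then x - 1 else z) \<circ> y) \<eta>" for x
    by (rule Sigma_average_jump[where n = n and y = y, OF incr])
      (auto simp: sigma_average_jump_right intro: sigma_jump_away)
  have "gen \<theta> p q (Sigma \<theta> n y) \<eta>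
      = (\<Sum>\<^sub>\<infinity>x\<in>UNIV. q x * (Sigma \<theta> n ((\<lambda>z. if z = x then x + 1 else z) \<circ> y) \<eta> - Sigma \<theta> n y \<eta>))
      + (\<Sum>\<^sub>\<infinity>x\<in>UNIV. p x * (Sigma \<theta> n ((\<lambda>z. if z = x then x - 1 else z) \<circ> y) \<eta> - Sigma \<theta> n y \<eta>))"
    unfolding gen_def left right ..
  also have "\<dots> = (\<Sum>k\<in>{1..2*n}. q (y k) * (Sigma \<theta> n (y(k := y k + 1)) \<eta> - Sigma \<theta> n y \<eta>))
      + (\<Sum>k\<in>{1..2*n}. p (y k) * (Sigma \<theta> n (y(k := y k - 1)) \<eta> - Sigma \<theta> n y \<eta>))"
    by (simp only: infsum_Sigma_endpoint_moves[OF inj])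
  also have "\<dots> = (\<Sum>k\<in>{1..2*n}. Lvar p q k (\<lambda>z. Sigma \<theta> n z \<eta>) y)"
    by (simp add: Lvar_def sum.distrib)
  finally show ?thesis .
qed

end
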